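(* Let $\bm{f}(\bm{y})=A\bm{y}+\bm{g}(\bm{y})$ with $A\in\mathbb{R}^{n\times n}$ and $\bm{g}:\mathbb{R}^n\to\mathbb{R}^n$ twice differentiable, fix $\hat{\bm{y}}^n\in\mathbb{R}^n$, and let $u\in(0,1]$ be a roundoff unit. For $\Delta t>0$ let $\hat{\bm{d}}_j\in\mathbb{R}^n$ satisfy $\|\hat{\bm{d}}_j\|_2\le C\Delta t$, set $\delta=\sqrt{u}/\Delta t$, and define $$\hat\Delta\bm{f}_j=\hat A\hat{\bm{d}}_j+\delta^{-1}\big(\hat{\bm{g}}(\hat{\bm{y}}^n+\delta\hat{\bm{d}}_j)-\bm{g}(\hat{\bm{y}}^n)\big),$$ where $\hat A\hat{\bm{d}}_j=(A+\Delta A_j)\hat{\bm{d}}_j$ with $\|\Delta A_j\|_2\le Cu\|A\|_2$, and $\hat{\bm{g}}$ is a low-precision evaluation of $\bm{g}$ satisfying $\|\hat{\bm{g}}(\bm{x})-\bm{g}(\bm{x})\|_2\le Cu$. Then $$\hat\Delta\bm{f}_j=\bm{f}(\hat{\bm{y}}^n+\hat{\bm{d}}_j)-\bm{f}(\hat{\bm{y}}^n)+O(\sqrt{u}\,\Delta t+\Delta t^2),$$ with the implied constant independent of $u$ and $\Delta t$.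
   Context: Here $C$ denotes generic positive constants depending only on $\bm{f}$ (not on $u$ or $\Delta t$). High-precision evaluations (such as $\bm{g}(\hat{\bm{y}}^n)$) are assumed exact; low-precision operations are modeled by the stated perturbations. *)

theory Defs
  imports "HOL-Analysis.Analysis"
begin

end

theory Submission
  imports Defs
begin

(* Up to the exact term f(y + d) - f y, the perturbed difference splits into four errors: the
   matrix perturbation dA d, of size C u |A| C dt; the roundoff of gh amplified by
   1/delta = dt / sqrt u, of size C sqrt u dt; and the linearisation errors of g at the steps
   delta d and d, whose linear parts cancel. Because the Jacobian of g is differentiable at y,
   it is Lipschitz near y, so the linearisation error of g at y is O(|h|^2) on every ball
   (near y by the mean value inequality, away from y by compactness). The difference quotient
   at step delta d is therefore off by O(delta |d|^2) = O(sqrt u dt), and the one at step d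
   by O(dt^2). *)

lemma differentiable_imp_lipschitz_at:
  fixes f :: "'a::real_normed_vector \<Rightarrow> 'b::real_normed_vector"
  assumes "f differentiable (at y)"
  obtains r L where "0 < r" "0 \<le> L" "\<And>x. norm (x - y) < r \<Longrightarrow> norm (f x - f y) \<le> L * norm (x - y)"
proof -
  obtain f' where f': "(f has_derivative f') (at y)"
    using assms unfolding differentiable_def by blast
  obtain K where K: "0 < K" "\<And>v. norm (f' v) \<le> norm v * K"
    using bounded_linear.pos_bounded[OF has_derivative_bounded_linear[OF f']] by blast
  obtain r where r: "0 < r" "\<And>x. norm (x - y) < r \<Longrightarrow> norm (f x - f y - f' (x - y)) \<le> 1 * norm (x - y)"
    using f' unfolding has_derivative_at_alt by (meson zero_less_one)
  have "norm (f x - f y) \<le> (1 + K) * norm (x - y)" if "norm (x - y) < r" for x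
  proof -
    have "norm (f x - f y) \<le> norm (f x - f y - f' (x - y)) + norm (f' (x - y))"
      using norm_triangle_ineq[of "f x - f y - f' (x - y)" "f' (x - y)"] by simp
    also have "\<dots> \<le> (1 + K) * norm (x - y)"
      using r(2)[OF that] K(2)[of "x - y"] by (simp add: algebra_simps)
    finally show ?thesis .
  qed
  with r(1) K(1) show ?thesis
    by (intro that[of r "1 + K"]) auto
qed

lemma onorm_matrix_vector_mult_le:
  fixes M :: "real^'n^'m"
  shows "onorm ((*v) M) \<le> real CARD('m) * real CARD('n) * norm M"
proof (rule onorm_le_matrix_component)
  fix i j
  have "\<bar>M $ i $ j\<bar> \<le> norm (M $ i)" by (rule component_le_norm_cart)
  also have "\<dots> \<le> norm M" by (rule Finite_Cartesian_Product.norm_nth_le)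
  finally show "\<bar>M $ i $ j\<bar> \<le> norm M" .
qed

lemma linearization_error_le_lipschitz_derivative:
  fixes f :: "'a::real_normed_vector \<Rightarrow> 'b::real_normed_vector"
  assumes f': "\<And>x. x \<in> ball y r \<Longrightarrow> (f has_derivative f' x) (at x)"
    and lip: "\<And>x. x \<in> ball y r \<Longrightarrow> onorm (f' x - f' y) \<le> L * norm (x - y)"
    and "0 \<le> L" and h: "norm h < r"
  shows "norm (f (y + h) - f y - f' y h) \<le> L * (norm h)\<^sup>2"
proof -
  have sub: "cball y (norm h) \<subseteq> ball y r"
    using h by auto
  have "norm (f (y + h) - f y - f' y (y + h - y)) \<le> norm (y + h - y) * (L * norm h)"
  proof (rule differentiable_bound_linearization[where S = "cball y (norm h)"])
    fix t :: real assume "t \<in> {0..1}"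
    then show "y + t *\<^sub>R (y + h - y) \<in> cball y (norm h)"
      by (auto simp: dist_norm intro: mult_left_le_one_le)
  next
    fix x assume "x \<in> cball y (norm h)"
    then show "(f has_derivative f' x) (at x within cball y (norm h))"
      using f' sub has_derivative_at_withinI by blast
  next
    fix x assume x: "x \<in> cball y (norm h)"
    then have "norm (x - y) \<le> norm h"
      by (simp add: dist_norm norm_minus_commute)
    then show "onorm (f' x - f' y) \<le> L * norm h"
      using lip[of x] x sub \<open>0 \<le> L\<close> by (meson mult_left_mono order_trans subsetD)
  qed auto
  then show ?thesis
    by (simp add: power2_eq_square mult_ac)
qed

lemma quadratic_bound_extends_to_cball:
  fixes f :: "'a::euclidean_space \<Rightarrow> 'b::real_normed_vector"
  assumes cont: "continuous_on (cball y R) f" and L: "bounded_linear L" and "0 < r"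
    and near: "\<And>h. norm h < r \<Longrightarrow> norm (f (y + h) - f y - L h) \<le> c * (norm h)\<^sup>2"
  obtains M where "0 \<le> M" "\<And>h. norm h \<le> R \<Longrightarrow> norm (f (y + h) - f y - L h) \<le> M * (norm h)\<^sup>2"
proof -
  define Q where "Q h = norm (f (y + h) - f y - L h)" for h
  have "continuous_on (cball 0 R) (\<lambda>h. f (y + h))"
    by (rule continuous_on_compose2[OF cont]) (auto intro!: continuous_intros simp: dist_norm)
  then have "continuous_on (cball 0 R) Q"
    unfolding Q_def by (intro continuous_intros linear_continuous_on[OF L])
  then have "compact (Q ` cball 0 R)"
    by (intro compact_continuous_image) auto
  then obtain B where B: "\<And>h. norm h \<le> R \<Longrightarrow> Q h \<le> B"
    using compact_imp_bounded bounded_iff by (metis mem_cball_0 image_eqI real_norm_def abs_le_D1)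
  define M where "M = max 0 (max c (B / r\<^sup>2))"
  have "Q h \<le> M * (norm h)\<^sup>2" if "norm h \<le> R" for h
  proof (cases "norm h < r")
    case True
    then have "Q h \<le> c * (norm h)\<^sup>2" unfolding Q_def by (rule near)
    also have "\<dots> \<le> M * (norm h)\<^sup>2" unfolding M_def by (intro mult_right_mono) auto
    finally show ?thesis .
  next
    case False
    have "Q h \<le> (B / r\<^sup>2) * r\<^sup>2" using B[OF that] \<open>0 < r\<close> by simp
    also have "\<dots> \<le> M * (norm h)\<^sup>2"
      using False \<open>0 < r\<close> unfolding M_def by (intro mult_mono power_mono) auto
    finally show ?thesis .
  qed
  then show ?thesis
    using that[of M] unfolding M_def Q_def by auto
qed

lemma linearization_error_quadratic:
  fixes g :: "real^'n \<Rightarrow> real^'m" and J :: "real^'n \<Rightarrow> real^'n^'m"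
  assumes g': "\<And>x. (g has_derivative (\<lambda>h. J x *v h)) (at x)"
    and J': "J differentiable (at y)"
  obtains M where "0 \<le> M"
    "\<And>h. norm h \<le> R \<Longrightarrow> norm (g (y + h) - g y - J y *v h) \<le> M * (norm h)\<^sup>2"
proof -
  define c where "c = real CARD('m) * real CARD('n)"
  obtain r L where r: "0 < r" "0 \<le> L"
    and J_lip: "\<And>x. norm (x - y) < r \<Longrightarrow> norm (J x - J y) \<le> L * norm (x - y)"
    using differentiable_imp_lipschitz_at[OF J'] by blast
  have onorm_lip: "onorm ((\<lambda>h. J x *v h) - (\<lambda>h. J y *v h)) \<le> (c * L) * norm (x - y)"
    if "x \<in> ball y r" for x
  proof -
    have "(\<lambda>h. J x *v h) - (\<lambda>h. J y *v h) = (*v) (J x - J y)"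
      by (auto simp: fun_diff_def matrix_vector_mult_diff_rdistrib)
    then have "onorm ((\<lambda>h. J x *v h) - (\<lambda>h. J y *v h)) \<le> c * norm (J x - J y)"
      using onorm_matrix_vector_mult_le[of "J x - J y"] by (simp add: c_def)
    also have "\<dots> \<le> c * (L * norm (x - y))"
      using J_lip[of x] that by (intro mult_left_mono) (auto simp: c_def dist_norm norm_minus_commute)
    finally show ?thesis by simp
  qed
  have near: "norm (g (y + h) - g y - J y *v h) \<le> (c * L) * (norm h)\<^sup>2" if "norm h < r" for h
    using linearization_error_le_lipschitz_derivative[where f' = "\<lambda>x h. J x *v h", OF g' onorm_lip] that r
    by (simp add: c_def)
  have "continuous_on (cball y R) g"
    using g' has_derivative_continuous continuous_at_imp_continuous_on by blast
  then show ?thesis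
    using quadratic_bound_extends_to_cball[OF _ _ r(1) near] that by auto
qed

lemma difference_quotient_error_le:
  fixes g L :: "'a::real_normed_vector \<Rightarrow> 'b::real_normed_vector"
  assumes taylor: "\<And>h. norm h \<le> C \<Longrightarrow> norm (g (y + h) - g y - L h) \<le> M * (norm h)\<^sup>2"
    and L: "linear L" and "0 \<le> M" and "0 < s" "s \<le> 1" "0 < dt" and d: "norm d \<le> C * dt"
  shows "norm ((1 / (s / dt)) *\<^sub>R (g (y + (s / dt) *\<^sub>R d) - g y) - L d) \<le> M * C\<^sup>2 * (s * dt)"
proof -
  define \<delta> where "\<delta> = s / dt"
  have "0 < \<delta>"
    using \<open>0 < s\<close> \<open>0 < dt\<close> by (simp add: \<delta>_def)
  have d_dt: "norm d / dt \<le> C"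
    using d \<open>0 < dt\<close> by (simp add: divide_le_eq mult.commute)
  have "norm (\<delta> *\<^sub>R d) = s * (norm d / dt)"
    using \<open>0 < s\<close> \<open>0 < dt\<close> by (simp add: \<delta>_def)
  also have "\<dots> \<le> C"
    using mult_right_mono[OF \<open>s \<le> 1\<close>, of "norm d / dt"] d_dt \<open>0 < dt\<close> by simp
  finally have "norm (\<delta> *\<^sub>R d) \<le> C" .
  have "(1 / \<delta>) *\<^sub>R (g (y + \<delta> *\<^sub>R d) - g y) - L d
      = (1 / \<delta>) *\<^sub>R (g (y + \<delta> *\<^sub>R d) - g y - L (\<delta> *\<^sub>R d))"
    using \<open>0 < \<delta>\<close> by (simp add: linear_cmul[OF L] scaleR_diff_right)
  also have "norm \<dots> \<le> (1 / \<delta>) * (M * (norm (\<delta> *\<^sub>R d))\<^sup>2)"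
    using taylor[OF \<open>norm (\<delta> *\<^sub>R d) \<le> C\<close>] \<open>0 < \<delta>\<close> by (simp add: divide_right_mono)
  also have "\<dots> = M * (s * dt) * (norm d / dt)\<^sup>2"
    using \<open>0 < s\<close> \<open>0 < dt\<close> by (simp add: \<delta>_def power2_eq_square)
  also have "\<dots> \<le> M * (s * dt) * C\<^sup>2"
    using d_dt \<open>0 \<le> M\<close> \<open>0 < s\<close> \<open>0 < dt\<close> by (intro mult_left_mono power_mono) auto
  finally show ?thesis
    by (simp add: \<delta>_def mult_ac)
qed

lemma perturbation_error_le:
  fixes dA :: "real^'n^'m"
  assumes dA: "onorm (\<lambda>v. dA *v v) \<le> C * u * a" and d: "norm d \<le> C * dt"
    and "0 \<le> C" "0 \<le> a" "0 \<le> u" "u \<le> s"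
  shows "norm (dA *v d) \<le> C\<^sup>2 * a * (s * dt)"
proof -
  have "norm (dA *v d) \<le> onorm (\<lambda>v. dA *v v) * norm d"
    by (rule onorm) simp
  also have "\<dots> \<le> (C * s * a) * (C * dt)"
  proof (rule mult_mono)
    have "C * u * a \<le> C * s * a"
      using \<open>u \<le> s\<close> \<open>0 \<le> C\<close> \<open>0 \<le> a\<close> by (intro mult_right_mono mult_left_mono)
    then show "onorm (\<lambda>v. dA *v v) \<le> C * s * a"
      using dA by simp
    show "0 \<le> C * s * a"
      using assms(3-6) by simp
  qed (use d in auto)
  finally show ?thesis
    by (simp add: power2_eq_square mult_ac)
qed

lemma roundoff_error_le:
  fixes v :: "'a::real_normed_vector"
  assumes "norm v \<le> C * s\<^sup>2" "0 < s" "0 < dt"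
  shows "norm ((1 / (s / dt)) *\<^sub>R v) \<le> C * (s * dt)"
proof -
  have "norm ((1 / (s / dt)) *\<^sub>R v) = (dt / s) * norm v"
    using assms(2,3) by simp
  also have "\<dots> \<le> (dt / s) * (C * s\<^sup>2)"
    using assms by (intro mult_left_mono) auto
  also have "\<dots> = C * (s * dt)"
    using assms(2) by (simp add: power2_eq_square)
  finally show ?thesis .
qed

lemma finite_difference_error_bound:
  fixes A dA :: "real^'n^'n" and g gh L :: "real^'n \<Rightarrow> real^'n" and y d :: "real^'n"
  assumes taylor: "\<And>h. norm h \<le> C \<Longrightarrow> norm (g (y + h) - g y - L h) \<le> M * (norm h)\<^sup>2"
    and L: "linear L" and "0 \<le> M"
    and "0 < u" "u \<le> 1" "0 < dt" "dt \<le> 1" and d: "norm d \<le> C * dt"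
    and dA: "onorm (\<lambda>v. dA *v v) \<le> C * u * onorm (\<lambda>v. A *v v)"
    and gh: "\<And>x. norm (gh x - g x) \<le> C * u"
  shows "norm ((A + dA) *v d + (1 / (sqrt u / dt)) *\<^sub>R (gh (y + (sqrt u / dt) *\<^sub>R d) - g y)
              - ((A *v (y + d) + g (y + d)) - (A *v y + g y)))
         \<le> (C\<^sup>2 * onorm (\<lambda>v. A *v v) + C + M * C\<^sup>2) * (sqrt u * dt + dt\<^sup>2)"
proof -
  define s where "s = sqrt u"
  define z where "z = y + (s / dt) *\<^sub>R d"
  define a where "a = onorm (\<lambda>v. A *v v)"
  have "0 < s" "s \<le> 1" "u = s\<^sup>2"
    using \<open>0 < u\<close> \<open>u \<le> 1\<close> by (auto simp: s_def)
  then have "u \<le> s"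
    by (simp add: power2_eq_square mult_left_le_one_le)
  have "0 \<le> C"
    using order_trans[OF norm_ge_zero d] \<open>0 < dt\<close> by (simp add: zero_le_mult_iff)
  have "0 \<le> a"
    unfolding a_def by (rule onorm_pos_le) simp
  have "norm (dA *v d) \<le> C\<^sup>2 * a * (s * dt)"
    using perturbation_error_le[OF dA[folded a_def] d \<open>0 \<le> C\<close> \<open>0 \<le> a\<close>] \<open>0 < u\<close> \<open>u \<le> s\<close>
    by simp
  moreover have "norm ((1 / (s / dt)) *\<^sub>R (gh z - g z)) \<le> C * (s * dt)"
    using roundoff_error_le gh[of z] \<open>u = s\<^sup>2\<close> \<open>0 < s\<close> \<open>0 < dt\<close> by simp
  moreover have "norm ((1 / (s / dt)) *\<^sub>R (g z - g y) - L d) \<le> M * C\<^sup>2 * (s * dt)"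
    unfolding z_def
    by (rule difference_quotient_error_le[OF taylor L \<open>0 \<le> M\<close> \<open>0 < s\<close> \<open>s \<le> 1\<close> \<open>0 < dt\<close> d])
  \<comment> \<open>the undivided difference is the case s = dt\<close>
  moreover have "norm (g (y + d) - g y - L d) \<le> M * C\<^sup>2 * (dt * dt)"
    using difference_quotient_error_le[OF taylor L \<open>0 \<le> M\<close> \<open>0 < dt\<close> \<open>dt \<le> 1\<close> \<open>0 < dt\<close> d] \<open>0 < dt\<close>
    by simp
  ultimately have "norm (dA *v d + (1 / (s / dt)) *\<^sub>R (gh z - g z)
                         + ((1 / (s / dt)) *\<^sub>R (g z - g y) - L d) - (g (y + d) - g y - L d))
      \<le> C\<^sup>2 * a * (s * dt) + C * (s * dt) + M * C\<^sup>2 * (s * dt) + M * C\<^sup>2 * (dt * dt)"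
    by (smt (verit) norm_triangle_ineq norm_triangle_ineq4)
  also have "\<dots> \<le> (C\<^sup>2 * a + C + M * C\<^sup>2) * (s * dt + dt\<^sup>2)"
  proof -
    have "0 \<le> (C\<^sup>2 * a + C) * dt\<^sup>2"
      using \<open>0 \<le> C\<close> \<open>0 \<le> a\<close> by simp
    then show ?thesis
      by (simp add: distrib_left distrib_right power2_eq_square)
  qed
  finally show ?thesis
    by (simp add: z_def s_def a_def matrix_vector_mult_add_rdistrib matrix_vector_right_distrib
        scaleR_diff_right algebra_simps)
qed

theorem lemmaA1:
  fixes A :: "real^'n^'n" and g :: "real^'n \<Rightarrow> real^'n" and f :: "real^'n \<Rightarrow> real^'n"
    and y :: "real^'n" and C :: real
  assumes f_def: "f = (\<lambda>x. A *v x + g x)"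
    and g_twice: "\<exists>J :: real^'n \<Rightarrow> real^'n^'n.
        (\<forall>x. (g has_derivative (\<lambda>h. J x *v h)) (at x)) \<and> (\<forall>x. J differentiable (at x))"
  shows "\<exists>dt0 > 0. \<exists>K. \<forall>(u::real) (dt::real) (dA::real^'n^'n) (d::real^'n) (gh::real^'n \<Rightarrow> real^'n).
      0 < u \<and> u \<le> 1 \<and> 0 < dt \<and> dt \<le> dt0 \<and> norm d \<le> C * dt
      \<and> onorm (\<lambda>v. dA *v v) \<le> C * u * onorm (\<lambda>v. A *v v)
      \<and> (\<forall>x. norm (gh x - g x) \<le> C * u)
      \<longrightarrow> (let \<delta> = sqrt u / dt;
               Df = (A + dA) *v d + (1 / \<delta>) *\<^sub>R (gh (y + \<delta> *\<^sub>R d) - g y)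
           in norm (Df - (f (y + d) - f y)) \<le> K * (sqrt u * dt + dt\<^sup>2))"
proof -
  obtain J :: "real^'n \<Rightarrow> real^'n^'n" where g': "\<And>x. (g has_derivative (\<lambda>h. J x *v h)) (at x)"
    and J': "\<And>x. J differentiable (at x)"
    using g_twice by blast
  obtain M where "0 \<le> M"
    and taylor: "\<And>h. norm h \<le> C \<Longrightarrow> norm (g (y + h) - g y - J y *v h) \<le> M * (norm h)\<^sup>2"
    using linearization_error_quadratic[OF g' J'] by blast
  define K where "K = C\<^sup>2 * onorm (\<lambda>v. A *v v) + C + M * C\<^sup>2"
  have bound: "0 < u \<and> u \<le> 1 \<and> 0 < dt \<and> dt \<le> 1 \<and> norm d \<le> C * dt
      \<and> onorm (\<lambda>v. dA *v v) \<le> C * u * onorm (\<lambda>v. A *v v)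
      \<and> (\<forall>x. norm (gh x - g x) \<le> C * u)
      \<longrightarrow> norm ((A + dA) *v d + (1 / (sqrt u / dt)) *\<^sub>R (gh (y + (sqrt u / dt) *\<^sub>R d) - g y)
              - (f (y + d) - f y)) \<le> K * (sqrt u * dt + dt\<^sup>2)"
    for u dt dA d gh
    unfolding f_def K_def
    using finite_difference_error_bound[OF taylor matrix_vector_mul_linear \<open>0 \<le> M\<close>,
        where u = u and dt = dt and d = d and dA = dA and gh = gh]
    by blast
  show ?thesis
    unfolding Let_def by (intro exI[of _ 1] exI[of _ K] conjI allI zero_less_one bound)
qed

end
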